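(* Let $p$ be a prime, $G$ a finite abelian $p$-group, and $\varphi\colon A\to B$ an isomorphism between subgroups of $G$. Let $r\ge 1$ be an integer such that for every integer $s>r$ and every $g\in G$: $g\in H(G,\varphi)$ if and only if $\varphi^i(g)$ is defined for $i=0,\dots,s-1$. Fix an integer $s>r$. For $i\in\mathbb{Z}/s\mathbb{Z}$ let $G_i=G\times\{i\}$, $A_i=A\times\{i\}$, $B_i=B\times\{i\}$, and let $K=G_0*_{A_0=B_1}G_1*_{A_1=B_2}\cdots*_{A_{s-2}=B_{s-1}}G_{s-1}$, where $A_i=B_{i+1}$ identifies $a\times i$ with $\varphi(a)\times(i+1)$. Let $G'=H_1(K;\mathbb{Z})$; each natural map $G_j\to G'$ is injective, and we regard $A':=A_{s-1}$ and $B':=B_0$ as subgroups of $G'$. Let $\varphi'\colon A'\to B'$ be the isomorphism $\varphi'(a\times(s-1))=\varphi(a)\times 0$. Then: (1) $H(G',\varphi')=A'\cap B'$. (2) The isomorphism $\Psi\colon G\to G_0\le G'$, $\Psi(g)=g\times 0$, restricts to an isomorphism $H(G,\varphi)\to H(G',\varphi')$, and $\Psi\circ\varphi^s=\varphi'\circ\Psi$ on $H(G,\varphi)$.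
   Context: For a group $Q$ and an isomorphism $\psi\colon A''\to B''$ between subgroups of $Q$, the core $H(Q,\psi)$ is $\bigcap_k H_k$ where $H_0=A''\cap B''$ and $H_{k+1}=\psi^{-1}(H_k)\cap H_k\cap\psi(H_k)$ (with $\psi^{-1}(H_k)=\{a\in A'':\psi(a)\in H_k\}$); $\psi$ restricts to an automorphism of $H(Q,\psi)$. "$\varphi^i(g)$ is defined" means $g$ lies in the domain of the $i$-fold composite of $\varphi$ regarded as a partial map $G\to G$. *)

theory Defs
  imports "HOL-Algebra.Algebra"
begin

fun core_seq :: "'a set \<Rightarrow> 'a set \<Rightarrow> ('a \<Rightarrow> 'a) \<Rightarrow> nat \<Rightarrow> 'a set" where
  "core_seq A B psi 0 = A \<inter> B"
| "core_seq A B psi (Suc k) =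
     {a \<in> A. psi a \<in> core_seq A B psi k} \<inter> core_seq A B psi k \<inter> psi ` core_seq A B psi k"

definition core :: "'a set \<Rightarrow> 'a set \<Rightarrow> ('a \<Rightarrow> 'a) \<Rightarrow> 'a set" where
  "core A B psi = (\<Inter>k. core_seq A B psi k)"

text \<open>Domain of the i-fold composite of phi, regarded as a partial map G -> G defined on A.\<close>
fun iter_dom :: "('a, 'b) monoid_scheme \<Rightarrow> 'a set \<Rightarrow> ('a \<Rightarrow> 'a) \<Rightarrow> nat \<Rightarrow> 'a set" where
  "iter_dom G A phi 0 = carrier G"
| "iter_dom G A phi (Suc i) = {g \<in> A. phi g \<in> iter_dom G A phi i}"

text \<open>The direct sum G_0 + ... + G_(s-1) of s copies of G (finite index set, so the
  product group is the direct sum).\<close>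
definition chain_sum :: "('a, 'b) monoid_scheme \<Rightarrow> nat \<Rightarrow> (nat \<Rightarrow> 'a) monoid" where
  "chain_sum G s = product_group {..<s} (\<lambda>_. G)"

definition chain_emb :: "('a, 'b) monoid_scheme \<Rightarrow> nat \<Rightarrow> nat \<Rightarrow> 'a \<Rightarrow> (nat \<Rightarrow> 'a)" where
  "chain_emb G s j g = (\<lambda>k\<in>{..<s}. if k = j then g else \<one>\<^bsub>G\<^esub>)"

definition chain_rel :: "('a, 'b) monoid_scheme \<Rightarrow> 'a set \<Rightarrow> ('a \<Rightarrow> 'a) \<Rightarrow> nat \<Rightarrow> (nat \<Rightarrow> 'a) set" where
  "chain_rel G A phi s = generate (chain_sum G s)
     {chain_emb G s j a \<otimes>\<^bsub>chain_sum G s\<^esub> inv\<^bsub>chain_sum G s\<^esub> (chain_emb G s (Suc j) (phi a)) | j a.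
        Suc j < s \<and> a \<in> A}"

text \<open>G' = H_1(K; Z) = abelianization of the amalgamated product K of the abelian groups G_j,
  i.e. the colimit in abelian groups: (G_0 + ... + G_(s-1)) / relations.\<close>
definition chain_H1 :: "('a, 'b) monoid_scheme \<Rightarrow> 'a set \<Rightarrow> ('a \<Rightarrow> 'a) \<Rightarrow> nat \<Rightarrow> (nat \<Rightarrow> 'a) set monoid" where
  "chain_H1 G A phi s = chain_sum G s Mod chain_rel G A phi s"

definition chain_map :: "('a, 'b) monoid_scheme \<Rightarrow> 'a set \<Rightarrow> ('a \<Rightarrow> 'a) \<Rightarrow> nat \<Rightarrow> nat \<Rightarrow> 'a \<Rightarrow> (nat \<Rightarrow> 'a) set" where
  "chain_map G A phi s j g = chain_rel G A phi s #>\<^bsub>chain_sum G s\<^esub> chain_emb G s j g"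

definition chain_phi :: "('a, 'b) monoid_scheme \<Rightarrow> 'a set \<Rightarrow> ('a \<Rightarrow> 'a) \<Rightarrow> nat \<Rightarrow> (nat \<Rightarrow> 'a) set \<Rightarrow> (nat \<Rightarrow> 'a) set" where
  "chain_phi G A phi s x =
     chain_map G A phi s 0 (phi (THE a. a \<in> A \<and> x = chain_map G A phi s (s - 1) a))"

end

theory Submission
  imports Defs
begin

text \<open>
  Write \<open>G' = (G_0 \<oplus> \<dots> \<oplus> G_(s-1)) / R\<close>. Every element of the relation subgroup \<open>R\<close> is the
  boundary \<open>(\<gamma>_(k+1) \<phi>(\<gamma>_k)\<^sup>-\<^sup>1)_k\<close> of a sequence \<open>1 = \<gamma>_0, \<gamma>_1, \<dots>, \<gamma>_s = 1\<close> in \<open>A\<close>.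
  Reading boundaries coordinate by coordinate shows that each \<open>G_j\<close> embeds into \<open>G'\<close>, and that
  \<open>b \<times> 0 = a \<times> (s-1)\<close> in \<open>G'\<close> exactly when \<open>\<phi>\<^sup>i(b)\<close> is defined for all \<open>i < s\<close> and
  \<open>a = \<phi>\<^sup>s\<^sup>-\<^sup>1(b)\<close>. By hypothesis such \<open>b\<close> lie in \<open>H(G,\<phi>)\<close>, so \<open>A' \<inter> B'\<close> is the image of
  \<open>H(G,\<phi>)\<close>, on which \<open>\<phi>'\<close> acts as \<open>\<phi>\<^sup>s\<close>. As \<open>\<phi>\<close> permutes the finite set \<open>H(G,\<phi>)\<close>,
  \<open>\<phi>'\<close> maps \<open>A' \<inter> B'\<close> onto itself, so \<open>A' \<inter> B'\<close> is its own core.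
\<close>

lemma core_subset: "core A B psi \<subseteq> A \<inter> B"
  unfolding core_def by (metis INT_lower UNIV_I core_seq.simps(1))

lemma core_closed: "x \<in> core A B psi \<Longrightarrow> psi x \<in> core A B psi"
  unfolding core_def by (auto dest: spec[of _ "Suc k" for k])

lemma funpow_in_core: "x \<in> core A B psi \<Longrightarrow> (psi ^^ n) x \<in> core A B psi"
  by (induction n) (auto intro: core_closed)

lemma funpow_core_in_domain: "x \<in> core A B psi \<Longrightarrow> (psi ^^ n) x \<in> A"
  by (rule IntD1[OF subsetD[OF core_subset funpow_in_core]])

lemma image_core:
  assumes "finite A" "inj_on psi A"
  shows "psi ` core A B psi = core A B psi"
proof (rule endo_inj_surj)
  show "finite (core A B psi)"
    using assms(1) core_subset finite_subset by (metis le_infE)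
  show "psi ` core A B psi \<subseteq> core A B psi"
    by (auto intro: core_closed)
  show "inj_on psi (core A B psi)"
    using assms(2) core_subset inj_on_subset by (metis le_infE)
qed

lemma funpow_image_core:
  "finite A \<Longrightarrow> inj_on psi A \<Longrightarrow> (psi ^^ n) ` core A B psi = core A B psi"
  by (induction n) (simp_all add: image_core flip: image_image)

lemma core_eq_inter:
  assumes "psi ` (A \<inter> B) = A \<inter> B"
  shows "core A B psi = A \<inter> B"
proof -
  have "core_seq A B psi k = A \<inter> B" for k
    by (induction k) (use assms in auto)
  then show ?thesis
    unfolding core_def by auto
qed

lemma iter_domI:
  assumes "phi ` A \<subseteq> carrier G" "b \<in> carrier G" "\<forall>i<n. (phi ^^ i) b \<in> A"
  shows "b \<in> iter_dom G A phi n"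
  using assms(2,3)
proof (induction n arbitrary: b)
  case (Suc n)
  then have "b \<in> A"
    by (metis funpow_0 zero_less_Suc)
  moreover have "phi b \<in> iter_dom G A phi n"
  proof (rule Suc.IH)
    show "phi b \<in> carrier G"
      using assms(1) \<open>b \<in> A\<close> by blast
    show "\<forall>i<n. (phi ^^ i) (phi b) \<in> A"
      using Suc.prems(2) by (metis Suc_mono comp_apply funpow_Suc_right)
  qed
  ultimately show ?case
    by simp
qed simp

lemma (in group) rcos_eq_iff:
  assumes "subgroup H G" "x \<in> carrier G" "y \<in> carrier G"
  shows "H #> x = H #> y \<longleftrightarrow> x \<otimes> inv y \<in> H"
proof
  assume "H #> x = H #> y"
  then have "x \<in> H #> y"
    using rcos_self assms by metis
  then show "x \<otimes> inv y \<in> H"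
    by (rule subgroup.rcos_module_imp[OF assms(1) is_group assms(3)])
next
  assume "x \<otimes> inv y \<in> H"
  then have "x \<in> H #> y"
    by (rule subgroup.rcos_module_rev[OF assms(1) is_group assms(3,2)])
  then show "H #> x = H #> y"
    using repr_independence assms by metis
qed

locale chain_amalgam = comm_group G for G :: "('a, 'b) monoid_scheme" (structure) +
  fixes A B :: "'a set" and phi :: "'a \<Rightarrow> 'a" and s :: nat
  assumes subgroup_A: "subgroup A G" and subgroup_B: "subgroup B G"
    and phi_iso: "phi \<in> iso (G\<lparr>carrier := A\<rparr>) (G\<lparr>carrier := B\<rparr>)"
    and two_le_s: "2 \<le> s"
begin

lemma A_carrier: "a \<in> A \<Longrightarrow> a \<in> carrier G"
  using subgroup.mem_carrier[OF subgroup_A] .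

lemma phi_bij: "bij_betw phi A B"
  using phi_iso by (simp add: iso_def)

lemma phi_in_B: "a \<in> A \<Longrightarrow> phi a \<in> B"
  using bij_betwE[OF phi_bij] by blast

lemma phi_inj: "inj_on phi A"
  by (rule bij_betw_imp_inj_on[OF phi_bij])

lemma phi_carrier: "a \<in> A \<Longrightarrow> phi a \<in> carrier G"
  using phi_in_B subgroup.mem_carrier[OF subgroup_B] by blast

lemma phi_group_hom: "group_hom (G\<lparr>carrier := A\<rparr>) (G\<lparr>carrier := B\<rparr>) phi"
  using phi_iso subgroup_A subgroup_B
  by (simp add: group_hom_def group_hom_axioms_def iso_def subgroup.subgroup_is_group)

lemma phi_one [simp]: "phi \<one> = \<one>"
  using group_hom.hom_one[OF phi_group_hom] by simp

lemma phi_mult: "a \<in> A \<Longrightarrow> c \<in> A \<Longrightarrow> phi (a \<otimes> c) = phi a \<otimes> phi c"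
  using group_hom.hom_mult[OF phi_group_hom, of a c] by simp

lemma phi_inv: "a \<in> A \<Longrightarrow> phi (inv a) = inv (phi a)"
  using group_hom.hom_inv[OF phi_group_hom, of a] subgroup_A subgroup_B phi_in_B by simp

lemma funpow_phi_one [simp]: "(phi ^^ n) \<one> = \<one>"
  by (induction n) simp_all

lemma funpow_phi_eq_one_iff:
  assumes "\<forall>i<n. (phi ^^ i) x \<in> A"
  shows "(phi ^^ n) x = \<one> \<longleftrightarrow> x = \<one>"
  using assms
proof (induction n arbitrary: x)
  case (Suc n)
  have "x \<in> A"
    using Suc.prems by (metis funpow_0 zero_less_Suc)
  have "(phi ^^ Suc n) x = \<one> \<longleftrightarrow> phi x = \<one>"
    using Suc.IH[of "phi x"] Suc.prems
    by (metis Suc_mono comp_apply funpow_Suc_right)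
  also have "\<dots> \<longleftrightarrow> x = \<one>"
    using inj_on_eq_iff[OF phi_inj \<open>x \<in> A\<close> subgroup.one_closed[OF subgroup_A]] by simp
  finally show ?case .
qed simp

abbreviation "Gs \<equiv> chain_sum G s"
abbreviation "emb \<equiv> chain_emb G s"
abbreviation "R \<equiv> chain_rel G A phi s"
abbreviation "map_first \<equiv> chain_map G A phi s 0"
abbreviation "map_last \<equiv> chain_map G A phi s (s - 1)"

lemma chain_sum_group: "group Gs"
  unfolding chain_sum_def by (simp add: is_group)

sublocale Gs: group Gs
  by (rule chain_sum_group)

lemma carrier_chain_sum: "carrier Gs = (\<Pi>\<^sub>E k\<in>{..<s}. carrier G)"
  unfolding chain_sum_def by simp

lemma mult_chain_sum: "x \<otimes>\<^bsub>Gs\<^esub> y = (\<lambda>k\<in>{..<s}. x k \<otimes> y k)"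
  unfolding chain_sum_def by simp

lemma inv_chain_sum: "x \<in> carrier Gs \<Longrightarrow> inv\<^bsub>Gs\<^esub> x = (\<lambda>k\<in>{..<s}. inv (x k))"
  unfolding chain_sum_def by (simp add: is_group)

lemma one_chain_sum: "\<one>\<^bsub>Gs\<^esub> = (\<lambda>k\<in>{..<s}. \<one>)"
  unfolding chain_sum_def by simp

lemma comm_group_chain_sum: "comm_group Gs"
proof (rule Gs.group_comm_groupI)
  fix x y
  assume "x \<in> carrier Gs" "y \<in> carrier Gs"
  then show "x \<otimes>\<^bsub>Gs\<^esub> y = y \<otimes>\<^bsub>Gs\<^esub> x"
    unfolding mult_chain_sum carrier_chain_sum by (auto simp: PiE_iff m_comm intro!: restrict_ext)
qed

lemma chain_emb_carrier: "g \<in> carrier G \<Longrightarrow> emb j g \<in> carrier Gs"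
  unfolding carrier_chain_sum chain_emb_def by auto

lemma chain_emb_group_hom: "group_hom G Gs (emb j)"
proof (intro group_hom.intro group_hom_axioms.intro homI)
  show "group Gs"
    by (rule chain_sum_group)
  show "emb j x \<in> carrier Gs" if "x \<in> carrier G" for x
    using that by (rule chain_emb_carrier)
  show "emb j (x \<otimes> y) = emb j x \<otimes>\<^bsub>Gs\<^esub> emb j y" if "x \<in> carrier G" "y \<in> carrier G" for x y
    unfolding mult_chain_sum chain_emb_def by (auto intro!: restrict_ext)
qed (rule is_group)

text \<open>
  The relation \<open>a \<times> j = \<phi>(a) \<times> (j + 1)\<close> is the boundary of the sequence that is \<open>a\<close> at
  position \<open>j + 1\<close> and \<open>\<one>\<close> elsewhere; products of relations are boundaries of products.
\<close>
definition boundary :: "(nat \<Rightarrow> 'a) \<Rightarrow> nat \<Rightarrow> 'a" where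
  "boundary \<gamma> = (\<lambda>k\<in>{..<s}. \<gamma> (Suc k) \<otimes> inv (phi (\<gamma> k)))"

definition boundaries :: "(nat \<Rightarrow> 'a) set" where
  "boundaries = {boundary \<gamma> | \<gamma>. \<gamma> 0 = \<one> \<and> \<gamma> s = \<one> \<and> range \<gamma> \<subseteq> A}"

lemma boundary_carrier:
  assumes "range \<gamma> \<subseteq> A"
  shows "boundary \<gamma> \<in> carrier Gs"
  unfolding carrier_chain_sum boundary_def
  using assms[THEN range_subsetD] A_carrier phi_carrier by simp

lemma boundary_mult:
  assumes "range \<gamma> \<subseteq> A" "range \<delta> \<subseteq> A"
  shows "boundary \<gamma> \<otimes>\<^bsub>Gs\<^esub> boundary \<delta> = boundary (\<lambda>k. \<gamma> k \<otimes> \<delta> k)"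
proof -
  have "\<gamma> (Suc k) \<otimes> inv (phi (\<gamma> k)) \<otimes> (\<delta> (Suc k) \<otimes> inv (phi (\<delta> k)))
      = \<gamma> (Suc k) \<otimes> \<delta> (Suc k) \<otimes> inv (phi (\<gamma> k \<otimes> \<delta> k))" for k
    using assms[THEN range_subsetD] A_carrier phi_carrier by (simp add: phi_mult inv_mult m_ac)
  then show ?thesis
    unfolding mult_chain_sum boundary_def by (auto intro!: restrict_ext)
qed

lemma boundary_inv:
  assumes "range \<gamma> \<subseteq> A"
  shows "inv\<^bsub>Gs\<^esub> boundary \<gamma> = boundary (\<lambda>k. inv \<gamma> k)"
proof -
  have "inv (\<gamma> (Suc k) \<otimes> inv (phi (\<gamma> k))) = inv \<gamma> (Suc k) \<otimes> inv (phi (inv \<gamma> k))" for k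
    using assms[THEN range_subsetD] A_carrier phi_carrier by (simp add: phi_inv inv_mult m_comm)
  then show ?thesis
    unfolding inv_chain_sum[OF boundary_carrier[OF assms]] by (auto simp: boundary_def intro!: restrict_ext)
qed

lemma subgroup_boundaries: "subgroup boundaries Gs"
proof
  show "boundaries \<subseteq> carrier Gs"
    unfolding boundaries_def using boundary_carrier by auto
  have "\<one>\<^bsub>Gs\<^esub> = boundary (\<lambda>_. \<one>)"
    by (auto simp: boundary_def one_chain_sum)
  then show "\<one>\<^bsub>Gs\<^esub> \<in> boundaries"
    unfolding boundaries_def using subgroup.one_closed[OF subgroup_A] by blast
next
  fix x y
  assume "x \<in> boundaries" "y \<in> boundaries"
  then obtain \<gamma> \<delta> where x: "x = boundary \<gamma>" "\<gamma> 0 = \<one>" "\<gamma> s = \<one>" "range \<gamma> \<subseteq> A"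
    and y: "y = boundary \<delta>" "\<delta> 0 = \<one>" "\<delta> s = \<one>" "range \<delta> \<subseteq> A"
    unfolding boundaries_def by blast
  have "range (\<lambda>k. \<gamma> k \<otimes> \<delta> k) \<subseteq> A"
    using x(4)[THEN range_subsetD] y(4)[THEN range_subsetD] subgroup.m_closed[OF subgroup_A] by auto
  then show "x \<otimes>\<^bsub>Gs\<^esub> y \<in> boundaries"
    unfolding boundaries_def using x y boundary_mult by auto
next
  fix x
  assume "x \<in> boundaries"
  then obtain \<gamma> where x: "x = boundary \<gamma>" "\<gamma> 0 = \<one>" "\<gamma> s = \<one>" "range \<gamma> \<subseteq> A"
    unfolding boundaries_def by blast
  have "range (\<lambda>k. inv \<gamma> k) \<subseteq> A"
    using x(4)[THEN range_subsetD] subgroup.m_inv_closed[OF subgroup_A] by auto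
  then show "inv\<^bsub>Gs\<^esub> x \<in> boundaries"
    unfolding boundaries_def using x boundary_inv by auto
qed

lemma relation_in_boundaries:
  assumes "Suc j < s" "a \<in> A"
  shows "emb j a \<otimes>\<^bsub>Gs\<^esub> inv\<^bsub>Gs\<^esub> emb (Suc j) (phi a) \<in> boundaries"
proof -
  define \<gamma> where "\<gamma> = (\<lambda>k. if k = Suc j then a else \<one>)"
  have "emb j a \<otimes>\<^bsub>Gs\<^esub> inv\<^bsub>Gs\<^esub> emb (Suc j) (phi a) = boundary \<gamma>"
    unfolding inv_chain_sum[OF chain_emb_carrier[OF phi_carrier[OF assms(2)]]] mult_chain_sum
    unfolding boundary_def \<gamma>_def chain_emb_def
    using assms A_carrier phi_carrier by (auto intro!: restrict_ext)
  moreover have "\<gamma> 0 = \<one> \<and> \<gamma> s = \<one> \<and> range \<gamma> \<subseteq> A"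
    using assms subgroup.one_closed[OF subgroup_A] unfolding \<gamma>_def by auto
  ultimately show ?thesis
    unfolding boundaries_def by blast
qed

lemma chain_rel_subset_boundaries: "R \<subseteq> boundaries"
  unfolding chain_rel_def
  by (rule Gs.generate_subgroup_incl[OF _ subgroup_boundaries]) (auto intro: relation_in_boundaries)

lemma subgroup_chain_rel: "subgroup R Gs"
  unfolding chain_rel_def
  by (rule Gs.generate_is_subgroup) (auto intro!: Gs.m_closed Gs.inv_closed chain_emb_carrier
      simp: A_carrier phi_carrier)

lemma boundary_orbit:
  assumes "range \<gamma> \<subseteq> A" "l \<le> s" "i \<le> l" "\<forall>k\<in>{i..<l}. boundary \<gamma> k = \<one>"
  shows "\<gamma> l = (phi ^^ (l - i)) (\<gamma> i)"
  using assms(2-4)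
proof (induction l)
  case (Suc l)
  show ?case
  proof (cases "i = Suc l")
    case False
    then have "i \<le> l"
      using Suc.prems by simp
    have "\<gamma> (Suc l) \<otimes> inv (phi (\<gamma> l)) = \<one>"
      using Suc.prems \<open>i \<le> l\<close> by (auto simp: boundary_def)
    then have "\<gamma> (Suc l) = phi (\<gamma> l)"
      using assms(1)[THEN range_subsetD] A_carrier phi_carrier by (simp add: inv_solve_right')
    also have "\<gamma> l = (phi ^^ (l - i)) (\<gamma> i)"
      using Suc \<open>i \<le> l\<close> by simp
    finally show ?thesis
      using \<open>i \<le> l\<close> by (simp add: Suc_diff_le)
  qed simp
qed simp

lemma chain_emb_in_boundaries_imp_one:
  assumes "j < s" "emb j c \<in> boundaries"
  shows "c = \<one>"
proof -
  obtain \<gamma> where \<gamma>: "emb j c = boundary \<gamma>" "\<gamma> 0 = \<one>" "\<gamma> s = \<one>" "range \<gamma> \<subseteq> A"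
    using assms(2) unfolding boundaries_def by blast
  have coord: "boundary \<gamma> k = (if k = j then c else \<one>)" if "k < s" for k
    using fun_cong[OF \<gamma>(1), of k] that unfolding chain_emb_def by simp
  have "\<gamma> j = \<one>"
    using boundary_orbit[of \<gamma> j 0] \<gamma> coord assms(1) by simp
  moreover have "\<gamma> (Suc j) = \<one>"
  proof -
    have orbit: "(phi ^^ i) (\<gamma> (Suc j)) = \<gamma> (Suc j + i)" if "Suc j + i \<le> s" for i
      using boundary_orbit[of \<gamma> "Suc j + i" "Suc j"] \<gamma>(4) coord that by simp
    then have "(phi ^^ (s - Suc j)) (\<gamma> (Suc j)) = \<one>"
      using \<gamma>(3) assms(1) by (metis le_add_diff_inverse less_eq_Suc_le order_refl)
    moreover have "\<forall>i<s - Suc j. (phi ^^ i) (\<gamma> (Suc j)) \<in> A"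
      using orbit \<gamma>(4) by auto
    ultimately show ?thesis
      using funpow_phi_eq_one_iff by blast
  qed
  ultimately show "c = \<one>"
    using coord[OF assms(1)] assms(1) by (simp add: boundary_def)
qed

lemma boundary_first_last_imp_orbit:
  assumes "b \<in> carrier G" "a \<in> A" "emb 0 b \<otimes>\<^bsub>Gs\<^esub> inv\<^bsub>Gs\<^esub> emb (s - 1) a \<in> boundaries"
  shows "(\<forall>i<s. (phi ^^ i) b \<in> A) \<and> a = (phi ^^ (s - 1)) b"
proof -
  obtain n where s: "s = Suc (Suc n)"
    using two_le_s by (metis add_2_eq_Suc le_Suc_ex)
  obtain \<gamma> where \<gamma>: "emb 0 b \<otimes>\<^bsub>Gs\<^esub> inv\<^bsub>Gs\<^esub> emb (Suc n) a = boundary \<gamma>"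
      "\<gamma> 0 = \<one>" "\<gamma> s = \<one>" "range \<gamma> \<subseteq> A"
    using assms(3) s unfolding boundaries_def by auto
  have \<gamma>_carrier: "\<gamma> k \<in> carrier G" "phi (\<gamma> k) \<in> carrier G" for k
    using \<gamma>(4)[THEN range_subsetD] A_carrier phi_carrier by auto
  have coord: "boundary \<gamma> k = (if k = 0 then b else if k = Suc n then inv a else \<one>)"
    if "k < s" for k
    using fun_cong[OF \<gamma>(1), of k] that s assms(1) A_carrier[OF assms(2)]
    unfolding inv_chain_sum[OF chain_emb_carrier[OF A_carrier[OF assms(2)]]] mult_chain_sum
    unfolding chain_emb_def by auto
  have "\<gamma> 1 = b"
    using coord[of 0] two_le_s \<gamma>(2) \<gamma>_carrier by (simp add: boundary_def)
  then have orbit: "\<gamma> (Suc i) = (phi ^^ i) b" if "i \<le> n" for i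
  proof -
    have "Suc i < s" "\<forall>k\<in>{1..<Suc i}. k \<noteq> Suc n"
      using that s by auto
    then show ?thesis
      using boundary_orbit[of \<gamma> "Suc i" 1] \<gamma>(4) coord \<open>\<gamma> 1 = b\<close> by simp
  qed
  have "inv (phi (\<gamma> (Suc n))) = inv a"
  proof -
    have "Suc n < s" "\<gamma> (Suc (Suc n)) = \<one>"
      using s \<gamma>(3) by auto
    then show ?thesis
      using coord[of "Suc n"] \<gamma>_carrier by (simp add: boundary_def)
  qed
  then have "phi (\<gamma> (Suc n)) = a"
    using \<gamma>_carrier A_carrier[OF assms(2)] by (metis inv_inv)
  then have last: "a = (phi ^^ Suc n) b"
    using orbit[of n] by simp
  have "(phi ^^ i) b \<in> A" if "i < s" for i
  proof (cases "i \<le> n")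
    case True
    then show ?thesis
      using orbit \<gamma>(4)[THEN range_subsetD] by metis
  next
    case False
    then have "i = Suc n"
      using that s by simp
    then show ?thesis
      using last assms(2) by simp
  qed
  then show ?thesis
    using last s by simp
qed

lemma chain_map_eq_iff:
  assumes "g \<in> carrier G" "h \<in> carrier G"
  shows "chain_map G A phi s j g = chain_map G A phi s k h
    \<longleftrightarrow> emb j g \<otimes>\<^bsub>Gs\<^esub> inv\<^bsub>Gs\<^esub> emb k h \<in> R"
  unfolding chain_map_def
  by (rule Gs.rcos_eq_iff[OF subgroup_chain_rel chain_emb_carrier[OF assms(1)]
        chain_emb_carrier[OF assms(2)]])

lemma inj_on_chain_map: "j < s \<Longrightarrow> inj_on (chain_map G A phi s j) (carrier G)"
proof (rule inj_onI)
  fix g h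
  assume "j < s" and gh: "g \<in> carrier G" "h \<in> carrier G"
    and "chain_map G A phi s j g = chain_map G A phi s j h"
  then have "emb j (g \<otimes> inv h) \<in> R"
    using chain_map_eq_iff group_hom.hom_mult[OF chain_emb_group_hom]
      group_hom.hom_inv[OF chain_emb_group_hom] by simp
  then have "g \<otimes> inv h = \<one>"
    using chain_emb_in_boundaries_imp_one[OF \<open>j < s\<close>] chain_rel_subset_boundaries by blast
  then show "g = h"
    using gh by (simp add: inv_solve_right')
qed

lemma chain_map_hom: "chain_map G A phi s j \<in> hom G (chain_H1 G A phi s)"
proof -
  have "normal R Gs"
    using comm_group.subgroup_imp_normal[OF comm_group_chain_sum subgroup_chain_rel] .
  then have "(\<lambda>x. R #>\<^bsub>Gs\<^esub> x) \<in> hom Gs (Gs Mod R)"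
    by (rule normal.r_coset_hom_Mod)
  then have "(\<lambda>x. R #>\<^bsub>Gs\<^esub> x) \<circ> emb j \<in> hom G (Gs Mod R)"
    by (rule Group.hom_compose[OF group_hom.homh[OF chain_emb_group_hom]])
  then show ?thesis
    unfolding chain_H1_def chain_map_def comp_def .
qed

lemma relation_telescope:
  assumes "h \<in> carrier G" "k < s" "\<forall>i<k. (phi ^^ i) h \<in> A"
  shows "emb 0 h \<otimes>\<^bsub>Gs\<^esub> inv\<^bsub>Gs\<^esub> emb k ((phi ^^ k) h) \<in> R"
  using assms(2,3)
proof (induction k)
  case 0
  show ?case
    using assms(1) chain_emb_carrier subgroup.one_closed[OF subgroup_chain_rel] by simp
next
  case (Suc k)
  define c where "c = (phi ^^ k) h"
  have "c \<in> A"
    using Suc.prems c_def by simp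
  then have c: "emb k c \<in> carrier Gs" "emb (Suc k) (phi c) \<in> carrier Gs"
    using A_carrier phi_carrier chain_emb_carrier by auto
  have "emb 0 h \<otimes>\<^bsub>Gs\<^esub> inv\<^bsub>Gs\<^esub> emb k c \<in> R"
    using Suc c_def by simp
  moreover have "emb k c \<otimes>\<^bsub>Gs\<^esub> inv\<^bsub>Gs\<^esub> emb (Suc k) (phi c) \<in> R"
    unfolding chain_rel_def by (rule generate.incl) (use Suc.prems \<open>c \<in> A\<close> in blast)
  ultimately have "(emb 0 h \<otimes>\<^bsub>Gs\<^esub> inv\<^bsub>Gs\<^esub> emb k c) \<otimes>\<^bsub>Gs\<^esub>
      (emb k c \<otimes>\<^bsub>Gs\<^esub> inv\<^bsub>Gs\<^esub> emb (Suc k) (phi c)) \<in> R"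
    by (rule subgroup.m_closed[OF subgroup_chain_rel])
  then show ?case
    using c chain_emb_carrier[OF assms(1)] c_def by (simp add: Gs.m_assoc[symmetric]) (simp add: Gs.m_assoc)
qed

lemma chain_map_first_eq_last_iff:
  assumes "b \<in> carrier G" "a \<in> A"
  shows "map_first b = map_last a \<longleftrightarrow> (\<forall>i<s. (phi ^^ i) b \<in> A) \<and> a = (phi ^^ (s - 1)) b"
proof -
  have "map_first b = map_last a \<longleftrightarrow> emb 0 b \<otimes>\<^bsub>Gs\<^esub> inv\<^bsub>Gs\<^esub> emb (s - 1) a \<in> R"
    by (rule chain_map_eq_iff[OF assms(1) A_carrier[OF assms(2)]])
  also have "\<dots> \<longleftrightarrow> (\<forall>i<s. (phi ^^ i) b \<in> A) \<and> a = (phi ^^ (s - 1)) b"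
  proof
    assume "emb 0 b \<otimes>\<^bsub>Gs\<^esub> inv\<^bsub>Gs\<^esub> emb (s - 1) a \<in> R"
    then show "(\<forall>i<s. (phi ^^ i) b \<in> A) \<and> a = (phi ^^ (s - 1)) b"
      using boundary_first_last_imp_orbit[OF assms] chain_rel_subset_boundaries by blast
  next
    assume "(\<forall>i<s. (phi ^^ i) b \<in> A) \<and> a = (phi ^^ (s - 1)) b"
    then show "emb 0 b \<otimes>\<^bsub>Gs\<^esub> inv\<^bsub>Gs\<^esub> emb (s - 1) a \<in> R"
      using relation_telescope[OF assms(1), of "s - 1"] two_le_s by simp
  qed
  finally show ?thesis .
qed

lemma chain_phi_map_first:
  assumes "\<forall>i<s. (phi ^^ i) h \<in> A"
  shows "chain_phi G A phi s (map_first h) = map_first ((phi ^^ s) h)"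
proof -
  have "h \<in> carrier G"
    using assms[rule_format, of 0] two_le_s A_carrier by simp
  moreover have "(phi ^^ (s - 1)) h \<in> A"
    using assms two_le_s by simp
  ultimately have "(THE a. a \<in> A \<and> map_first h = map_last a) = (phi ^^ (s - 1)) h"
    using assms chain_map_first_eq_last_iff by (intro the_equality) auto
  moreover obtain n where "s = Suc n"
    using two_le_s by (cases s) auto
  ultimately show ?thesis
    unfolding chain_phi_def by simp
qed

lemma inter_eq_image_core:
  assumes "\<forall>b\<in>carrier G. (\<forall>i<s. (phi ^^ i) b \<in> A) \<longrightarrow> b \<in> core A B phi"
  shows "map_last ` A \<inter> map_first ` B = map_first ` core A B phi"
proof
  show "map_last ` A \<inter> map_first ` B \<subseteq> map_first ` core A B phi"
  proof
    fix x
    assume "x \<in> map_last ` A \<inter> map_first ` B"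
    then obtain a b where "a \<in> A" "b \<in> B" "x = map_last a" "x = map_first b"
      by blast
    moreover have "b \<in> carrier G"
      using \<open>b \<in> B\<close> by (rule subgroup.mem_carrier[OF subgroup_B])
    ultimately have "\<forall>i<s. (phi ^^ i) b \<in> A"
      using chain_map_first_eq_last_iff by simp
    then have "b \<in> core A B phi"
      using assms \<open>b \<in> carrier G\<close> by blast
    then show "x \<in> map_first ` core A B phi"
      using \<open>x = map_first b\<close> by blast
  qed
  show "map_first ` core A B phi \<subseteq> map_last ` A \<inter> map_first ` B"
  proof
    fix x
    assume "x \<in> map_first ` core A B phi"
    then obtain h where h: "h \<in> core A B phi" "x = map_first h"
      by blast
    have "h \<in> A \<inter> B"
      by (rule subsetD[OF core_subset h(1)])
    have orbit: "(phi ^^ i) h \<in> A" for i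
      using h(1) by (rule funpow_core_in_domain)
    have "x = map_last ((phi ^^ (s - 1)) h)"
      using chain_map_first_eq_last_iff[OF A_carrier orbit] \<open>h \<in> A \<inter> B\<close> h(2) orbit by simp
    then show "x \<in> map_last ` A \<inter> map_first ` B"
      using h(2) orbit \<open>h \<in> A \<inter> B\<close> by blast
  qed
qed

lemma core_chain_phi:
  assumes "finite A" "\<forall>b\<in>carrier G. (\<forall>i<s. (phi ^^ i) b \<in> A) \<longrightarrow> b \<in> core A B phi"
  shows "core (map_last ` A) (map_first ` B) (chain_phi G A phi s)
    = map_last ` A \<inter> map_first ` B"
proof (rule core_eq_inter)
  have "chain_phi G A phi s ` map_first ` core A B phi = map_first ` (phi ^^ s) ` core A B phi"
    unfolding image_image by (rule image_cong) (simp_all add: chain_phi_map_first funpow_core_in_domain)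
  also have "\<dots> = map_first ` core A B phi"
    using funpow_image_core[OF assms(1) phi_inj] by simp
  finally show "chain_phi G A phi s ` (map_last ` A \<inter> map_first ` B) = map_last ` A \<inter> map_first ` B"
    unfolding inter_eq_image_core[OF assms(2)] .
qed

end

theorem lemma5p8:
  fixes G :: "('a, 'b) monoid_scheme" and p :: nat and r s :: nat
    and A B :: "'a set" and phi :: "'a \<Rightarrow> 'a"
  assumes "Factorial_Ring.prime p"
    and "comm_group G" and "finite (carrier G)" and "\<exists>n. order G = p ^ n"
    and "subgroup A G" and "subgroup B G"
    and "phi \<in> iso (G\<lparr>carrier := A\<rparr>) (G\<lparr>carrier := B\<rparr>)"
    and "r \<ge> 1"
    and "\<forall>s'>r. \<forall>g\<in>carrier G.
           g \<in> core A B phi \<longleftrightarrow> (\<forall>i<s'. g \<in> iter_dom G A phi i)"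
    and "s > r"
  shows "(\<forall>j<s. inj_on (chain_map G A phi s j) (carrier G))
    \<and> core (chain_map G A phi s (s - 1) ` A) (chain_map G A phi s 0 ` B) (chain_phi G A phi s)
        = chain_map G A phi s (s - 1) ` A \<inter> chain_map G A phi s 0 ` B
    \<and> chain_map G A phi s 0 \<in> hom G (chain_H1 G A phi s)
    \<and> bij_betw (chain_map G A phi s 0) (core A B phi)
        (core (chain_map G A phi s (s - 1) ` A) (chain_map G A phi s 0 ` B) (chain_phi G A phi s))
    \<and> (\<forall>h\<in>core A B phi.
         chain_map G A phi s 0 ((phi ^^ s) h) = chain_phi G A phi s (chain_map G A phi s 0 h))"
proof -
  interpret chain_amalgam G A B phi s
    using assms(2,5-8,10) by (simp add: chain_amalgam_def chain_amalgam_axioms_def)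
  have "finite A"
    by (rule finite_subset[OF subgroup.subset[OF assms(5)] assms(3)])
  have "phi ` A \<subseteq> carrier G"
    using phi_carrier by blast
  have orbit_in_core: "\<forall>b\<in>carrier G. (\<forall>i<s. (phi ^^ i) b \<in> A) \<longrightarrow> b \<in> core A B phi"
  proof (intro ballI impI)
    fix b
    assume "b \<in> carrier G" "\<forall>i<s. (phi ^^ i) b \<in> A"
    then have "\<forall>i<s. b \<in> iter_dom G A phi i"
      using iter_domI[OF \<open>phi ` A \<subseteq> carrier G\<close>] by simp
    then show "b \<in> core A B phi"
      using assms(9,10) \<open>b \<in> carrier G\<close> by blast
  qed
  have core_image: "core (map_last ` A) (map_first ` B) (chain_phi G A phi s) = map_first ` core A B phi"
    using core_chain_phi[OF \<open>finite A\<close> orbit_in_core] inter_eq_image_core[OF orbit_in_core] by simp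
  have "core A B phi \<subseteq> carrier G"
    using core_subset[of A B phi] subgroup.subset[OF assms(5)] by auto
  with inj_on_chain_map[of 0] two_le_s have "inj_on map_first (core A B phi)"
    by (simp add: inj_on_subset)
  then have "bij_betw map_first (core A B phi)
      (core (map_last ` A) (map_first ` B) (chain_phi G A phi s))"
    unfolding core_image by (rule inj_on_imp_bij_betw)
  moreover have "map_first ((phi ^^ s) h) = chain_phi G A phi s (map_first h)"
    if "h \<in> core A B phi" for h
    using chain_phi_map_first funpow_core_in_domain[OF that] by simp
  ultimately show ?thesis
    using inj_on_chain_map core_chain_phi[OF \<open>finite A\<close> orbit_in_core] chain_map_hom by simp
qed

end
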